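(* Let $G$ be a group, $A\subseteq G$ a nonempty finite set and $\epsilon\in(0,1)$. Let $X=\operatorname{St}^\ell_{\epsilon^2/162}(A)$ and fix $\nu\in(0,1)$ with $\nu\leq|X|/|A|$. Set $S=\operatorname{St}^r_{\epsilon\nu/9}(A)$ and $A'=\{a\in A:|Xa\setminus A|<\frac{\epsilon}{9}|X|\}$. If $D\subseteq G$ satisfies $A'\subseteq D\subseteq A'S$, then $|A\triangle D|<\epsilon|A|$.
   Context: $Xa=\{xa:x\in X\}$, $A'S=\{as:a\in A',s\in S\}$, $\triangle$ symmetric difference. For finite $A$ and $\eta\in(0,1)$: $\operatorname{St}^\ell_\eta(A)=\{x\in G:|xA\triangle A|\leq\eta|A|\}$ and $\operatorname{St}^r_\eta(A)=\{x\in G:|Ax\triangle A|\leq\eta|A|\}$. *)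

theory Defs
  imports Complex_Main "HOL-Algebra.Coset"
begin

definition left_stab :: "('a, 'b) monoid_scheme \<Rightarrow> real \<Rightarrow> 'a set \<Rightarrow> 'a set" where
  "left_stab G eta A =
     {x \<in> carrier G. real (card ((x <#\<^bsub>G\<^esub> A) - A \<union> (A - (x <#\<^bsub>G\<^esub> A)))) \<le> eta * real (card A)}"

definition right_stab :: "('a, 'b) monoid_scheme \<Rightarrow> real \<Rightarrow> 'a set \<Rightarrow> 'a set" where
  "right_stab G eta A =
     {x \<in> carrier G. real (card ((A #>\<^bsub>G\<^esub> x) - A \<union> (A - (A #>\<^bsub>G\<^esub> x)))) \<le> eta * real (card A)}"

end

theory Submission
  imports Defs
begin

(* Let X = St^l_eta(A) with eta = eps^2/162, so every x in X moves at most eta |A| points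
   of A out of A and misses at most eta |A| points of A.  Counting the pairs (x, a) in
   X * A with x a outside A in two ways, at most eps/18 |A| elements a of A can have
   |Xa - A| >= eps/9 |X|; they contain A - D.  Every y in D - A is a product a s with
   |Xa - A| < eps/9 |X| and |As - A| <= eps nu/9 |A| <= eps/9 |X|, so x y lies in A for
   at least 7/9 of all x in X; counting the pairs (x, y) with x y in A in two ways
   bounds |D - A| by 9/7 eta |A|. *)

lemma sum_card_Collect_swap:
  assumes "finite X" "finite Y"
  shows "(\<Sum>x\<in>X. card {y\<in>Y. P x y}) = (\<Sum>y\<in>Y. card {x\<in>X. P x y})"
proof -
  have card_Collect: "card {z\<in>Z. Q z} = (\<Sum>z\<in>Z. if Q z then 1 else 0)" if "finite Z" for Z :: "'c set" and Q
    using that by (simp add: sum.If_cases Int_def)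
  show ?thesis
    using assms by (simp add: card_Collect sum.swap[of _ X Y])
qed

lemma card_threshold_mult_le_sum:
  fixes f :: "'a \<Rightarrow> real"
  assumes "finite A" "\<And>a. a \<in> A \<Longrightarrow> 0 \<le> f a"
  shows "t * card {a\<in>A. t \<le> f a} \<le> sum f A"
proof -
  have "t * card {a\<in>A. t \<le> f a} = (\<Sum>a\<in>{a\<in>A. t \<le> f a}. t)"
    by simp
  also have "\<dots> \<le> (\<Sum>a\<in>{a\<in>A. t \<le> f a}. f a)"
    by (rule sum_mono) simp
  also have "\<dots> \<le> sum f A"
    using assms by (intro sum_mono2) auto
  finally show ?thesis .
qed

lemma left_stab_subset_carrier: "left_stab G \<eta> A \<subseteq> carrier G"
  by (auto simp: left_stab_def)

lemma left_stab_card_Diff_le: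
  fixes \<eta> :: real
  assumes "x \<in> left_stab G \<eta> A" "finite A"
  shows "card ((x <#\<^bsub>G\<^esub> A) - A) \<le> \<eta> * card A"
    and "card (A - (x <#\<^bsub>G\<^esub> A)) \<le> \<eta> * card A"
proof -
  let ?sym_diff = "(x <#\<^bsub>G\<^esub> A) - A \<union> (A - (x <#\<^bsub>G\<^esub> A))"
  have "finite ?sym_diff"
    using assms(2) by (simp add: l_coset_def)
  then have "card ((x <#\<^bsub>G\<^esub> A) - A) \<le> card ?sym_diff" "card (A - (x <#\<^bsub>G\<^esub> A)) \<le> card ?sym_diff"
    by (auto intro: card_mono)
  moreover have "card ?sym_diff \<le> \<eta> * card A"
    using assms(1) by (simp add: left_stab_def)
  ultimately show "card ((x <#\<^bsub>G\<^esub> A) - A) \<le> \<eta> * card A" "card (A - (x <#\<^bsub>G\<^esub> A)) \<le> \<eta> * card A"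
    by (simp_all add: order_trans)
qed

lemma right_stab_card_Diff_le:
  fixes \<rho> :: real
  assumes "s \<in> right_stab G \<rho> A" "finite A"
  shows "card ((A #>\<^bsub>G\<^esub> s) - A) \<le> \<rho> * card A"
proof -
  let ?sym_diff = "(A #>\<^bsub>G\<^esub> s) - A \<union> (A - (A #>\<^bsub>G\<^esub> s))"
  have "finite ?sym_diff"
    using assms(2) by (simp add: r_coset_def)
  then have "card ((A #>\<^bsub>G\<^esub> s) - A) \<le> card ?sym_diff"
    by (auto intro: card_mono)
  moreover have "card ?sym_diff \<le> \<rho> * card A"
    using assms(1) by (simp add: right_stab_def)
  ultimately show ?thesis
    by (simp add: order_trans)
qed

context group
begin

lemma card_l_coset_Diff:
  assumes "x \<in> carrier G" "A \<subseteq> carrier G"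
  shows "card ((x <# A) - A) = card {a\<in>A. x \<otimes> a \<notin> A}"
proof -
  have "(x <# A) - A = (\<lambda>a. x \<otimes> a) ` {a\<in>A. x \<otimes> a \<notin> A}"
    unfolding l_coset_def by auto
  moreover have "inj_on (\<lambda>a. x \<otimes> a) A"
    using assms inj_on_cmult inj_on_subset by blast
  ultimately show ?thesis
    by (simp add: card_image inj_on_subset)
qed

lemma card_set_mult_singleton_Diff:
  assumes "a \<in> carrier G" "X \<subseteq> carrier G"
  shows "card ((X <#> {a}) - A) = card {x\<in>X. x \<otimes> a \<notin> A}"
proof -
  have "(X <#> {a}) - A = (\<lambda>x. x \<otimes> a) ` {x\<in>X. x \<otimes> a \<notin> A}"
    unfolding set_mult_def by auto
  moreover have "inj_on (\<lambda>x. x \<otimes> a) X"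
    using assms inj_on_multc inj_on_subset by blast
  ultimately show ?thesis
    by (simp add: card_image inj_on_subset)
qed

lemma card_mult_into_le_card_Diff_l_coset:
  assumes "x \<in> carrier G" "A \<subseteq> carrier G" "finite A" "Y \<subseteq> carrier G" "Y \<inter> A = {}"
  shows "card {y\<in>Y. x \<otimes> y \<in> A} \<le> card (A - (x <# A))"
proof (rule card_inj_on_le)
  show "inj_on (\<lambda>y. x \<otimes> y) {y\<in>Y. x \<otimes> y \<in> A}"
    using assms inj_on_cmult[of x] by (auto intro: inj_on_subset)
  show "(\<lambda>y. x \<otimes> y) ` {y\<in>Y. x \<otimes> y \<in> A} \<subseteq> A - (x <# A)"
  proof clarsimp
    fix y assume y: "y \<in> Y" "x \<otimes> y \<in> A" "x \<otimes> y \<in> x <# A"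
    then obtain a where "a \<in> A" "x \<otimes> y = x \<otimes> a"
      unfolding l_coset_def by auto
    with y assms have "y = a"
      by (meson inj_on_cmult inj_onD subsetD)
    with y assms \<open>a \<in> A\<close> show False
      by blast
  qed
  show "finite (A - (x <# A))"
    using assms(3) by simp
qed

lemma sum_card_set_mult_singleton_Diff:
  assumes "A \<subseteq> carrier G" "finite A" "X \<subseteq> carrier G" "finite X"
  shows "(\<Sum>a\<in>A. card ((X <#> {a}) - A)) = (\<Sum>x\<in>X. card ((x <# A) - A))"
  using assms sum_card_Collect_swap[of X A "\<lambda>x a. x \<otimes> a \<notin> A"]
  by (simp add: subsetD card_set_mult_singleton_Diff card_l_coset_Diff)

lemma sum_card_mult_into_le:
  assumes "A \<subseteq> carrier G" "finite A" "X \<subseteq> carrier G" "finite X"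
    and "B \<subseteq> carrier G" "finite B" "B \<inter> A = {}"
  shows "(\<Sum>y\<in>B. card {x\<in>X. x \<otimes> y \<in> A}) \<le> (\<Sum>x\<in>X. card (A - (x <# A)))"
proof -
  have "(\<Sum>y\<in>B. card {x\<in>X. x \<otimes> y \<in> A}) = (\<Sum>x\<in>X. card {y\<in>B. x \<otimes> y \<in> A})"
    using assms by (intro sum_card_Collect_swap[symmetric])
  also have "\<dots> \<le> (\<Sum>x\<in>X. card (A - (x <# A)))"
    using assms by (intro sum_mono card_mult_into_le_card_Diff_l_coset) auto
  finally show ?thesis .
qed

lemma card_le_card_mult_into:
  assumes "A \<subseteq> carrier G" "finite A" "X \<subseteq> carrier G" "finite X"
    and "a \<in> carrier G" "s \<in> carrier G"
  shows "card X \<le> card {x\<in>X. x \<otimes> (a \<otimes> s) \<in> A} + card ((X <#> {a}) - A) + card ((A #> s) - A)"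
proof -
  let ?lost = "{x\<in>X. x \<otimes> a \<in> A \<and> x \<otimes> (a \<otimes> s) \<notin> A}"
  have "inj_on (\<lambda>x. x \<otimes> (a \<otimes> s)) ?lost"
    using assms inj_on_multc[of "a \<otimes> s"] by (auto intro: inj_on_subset)
  moreover have "(\<lambda>x. x \<otimes> (a \<otimes> s)) ` ?lost \<subseteq> (A #> s) - A"
  proof clarsimp
    fix x assume x: "x \<in> X" "x \<otimes> a \<in> A"
    with assms have "x \<otimes> (a \<otimes> s) = (x \<otimes> a) \<otimes> s"
      by (simp add: m_assoc subsetD)
    with x show "x \<otimes> (a \<otimes> s) \<in> A #> s"
      unfolding r_coset_def by auto
  qed
  moreover have "finite ((A #> s) - A)"
    using assms(2) by (simp add: r_coset_def)
  ultimately have lost: "card ?lost \<le> card ((A #> s) - A)"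
    by (rule card_inj_on_le)
  let ?into = "{x\<in>X. x \<otimes> (a \<otimes> s) \<in> A}" and ?out = "{x\<in>X. x \<otimes> a \<notin> A}"
  have "card X \<le> card (?into \<union> ?out \<union> ?lost)"
    using assms(4) by (intro card_mono) auto
  also have "\<dots> \<le> card ?into + card ?out + card ?lost"
    using card_Un_le[of "?into \<union> ?out" ?lost] card_Un_le[of ?into ?out] by linarith
  finally show ?thesis
    using lost assms by (simp add: card_set_mult_singleton_Diff)
qed

lemma card_Diff_le_of_popular_subset:
  fixes \<eta> \<delta> :: real
  assumes "A \<subseteq> carrier G" "finite A" "X \<subseteq> left_stab G \<eta> A" "finite X" "X \<noteq> {}" "0 < \<delta>"
    and "{a\<in>A. card ((X <#> {a}) - A) < \<delta> * card X} \<subseteq> D"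
  shows "card (A - D) \<le> \<eta> / \<delta> * card A"
proof -
  let ?unpopular = "{a\<in>A. \<delta> * card X \<le> card ((X <#> {a}) - A)}"
  have X: "X \<subseteq> carrier G"
    using assms(3) left_stab_subset_carrier by (rule order_trans)
  have "\<delta> * card X * card ?unpopular \<le> (\<Sum>a\<in>A. real (card ((X <#> {a}) - A)))"
    using assms(2) by (intro card_threshold_mult_le_sum) auto
  also have "\<dots> = (\<Sum>x\<in>X. real (card ((x <# A) - A)))"
    using arg_cong[OF sum_card_set_mult_singleton_Diff[OF assms(1,2) X assms(4)], of real] by simp
  also have "\<dots> \<le> (\<Sum>x\<in>X. \<eta> * card A)"
    using assms(2,3) by (intro sum_mono left_stab_card_Diff_le) auto
  finally have "card ?unpopular * \<delta> * card X \<le> \<eta> * card A * card X"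
    by (simp add: algebra_simps)
  then have "card ?unpopular \<le> \<eta> / \<delta> * card A"
    using assms(4-6) by (simp add: card_gt_0_iff field_simps)
  moreover have "card (A - D) \<le> card ?unpopular"
    using assms(2,7) by (intro card_mono) (auto simp: not_less)
  ultimately show ?thesis
    by linarith
qed

lemma card_often_mult_into_le:
  fixes \<eta> t :: real
  assumes "A \<subseteq> carrier G" "finite A" "X \<subseteq> left_stab G \<eta> A" "finite X" "X \<noteq> {}" "0 < t"
    and "B \<subseteq> carrier G" "B \<inter> A = {}" "\<And>y. y \<in> B \<Longrightarrow> t * card X \<le> card {x\<in>X. x \<otimes> y \<in> A}"
  shows "card B \<le> \<eta> / t * card A"
proof (cases "finite B")
  case False
  obtain x where "x \<in> X"
    using assms(5) by blast
  then have "real (card ((x <# A) - A)) \<le> \<eta> * card A"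
    using assms(2,3) by (intro left_stab_card_Diff_le) auto
  then have "0 \<le> \<eta> * card A"
    using of_nat_0_le_iff order_trans by blast
  with False show ?thesis
    using assms(6) by simp
next
  case True
  have X: "X \<subseteq> carrier G"
    using assms(3) left_stab_subset_carrier by (rule order_trans)
  have "t * card X * card B = (\<Sum>y\<in>B. t * card X)"
    by simp
  also have "\<dots> \<le> (\<Sum>y\<in>B. real (card {x\<in>X. x \<otimes> y \<in> A}))"
    by (intro sum_mono assms(9))
  also have "\<dots> \<le> (\<Sum>x\<in>X. real (card (A - (x <# A))))"
    using sum_card_mult_into_le[OF assms(1,2) X assms(4,7) True assms(8)] by (simp flip: of_nat_sum)
  also have "\<dots> \<le> (\<Sum>x\<in>X. \<eta> * card A)"
    using assms(2,3) by (intro sum_mono left_stab_card_Diff_le) auto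
  finally have "card B * t * card X \<le> \<eta> * card A * card X"
    by (simp add: algebra_simps)
  then show ?thesis
    using assms(4-6) by (simp add: card_gt_0_iff field_simps)
qed

lemma card_mult_into_ge:
  fixes \<delta> \<rho> :: real
  assumes "A \<subseteq> carrier G" "finite A" "X \<subseteq> carrier G" "finite X" "a \<in> carrier G"
    and "card ((X <#> {a}) - A) < \<delta> * card X"
    and "s \<in> right_stab G \<rho> A" "\<rho> * card A \<le> \<delta> * card X"
  shows "(1 - 2 * \<delta>) * card X \<le> card {x\<in>X. x \<otimes> (a \<otimes> s) \<in> A}"
proof -
  have "s \<in> carrier G"
    using assms(7) by (simp add: right_stab_def)
  then have "card X \<le> card {x\<in>X. x \<otimes> (a \<otimes> s) \<in> A} + card ((X <#> {a}) - A) + card ((A #> s) - A)"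
    by (rule card_le_card_mult_into[OF assms(1-5)])
  then have "real (card X) \<le> card {x\<in>X. x \<otimes> (a \<otimes> s) \<in> A} + card ((X <#> {a}) - A) + card ((A #> s) - A)"
    by (simp only: of_nat_add[symmetric] of_nat_le_iff)
  moreover have "card ((A #> s) - A) \<le> \<rho> * card A"
    by (rule right_stab_card_Diff_le[OF assms(7,2)])
  ultimately show ?thesis
    using assms(6,8) by (simp add: algebra_simps)
qed

lemma card_Diff_le_of_subset_popular_mult_stab:
  fixes \<eta> \<delta> \<nu> :: real
  assumes "A \<subseteq> carrier G" "finite A" "X \<subseteq> left_stab G \<eta> A" "finite X" "X \<noteq> {}"
    and "0 < \<delta>" "\<delta> < 1 / 2" "\<nu> * card A \<le> card X"
    and "D \<subseteq> {a\<in>A. card ((X <#> {a}) - A) < \<delta> * card X} <#> right_stab G (\<delta> * \<nu>) A"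
  shows "card (D - A) \<le> \<eta> / (1 - 2 * \<delta>) * card A"
proof (rule card_often_mult_into_le[OF assms(1-5)])
  let ?popular = "{a\<in>A. card ((X <#> {a}) - A) < \<delta> * card X}"
  have "?popular <#> right_stab G (\<delta> * \<nu>) A \<subseteq> carrier G"
    using assms(1) by (intro set_mult_closed) (auto simp: right_stab_def)
  with assms(9) show "D - A \<subseteq> carrier G"
    by blast
  have X: "X \<subseteq> carrier G"
    using assms(3) left_stab_subset_carrier by (rule order_trans)
  fix y assume "y \<in> D - A"
  then obtain a s where a: "a \<in> ?popular" and s: "s \<in> right_stab G (\<delta> * \<nu>) A" and "y = a \<otimes> s"
    using assms(9) unfolding set_mult_def by blast
  have "\<delta> * \<nu> * card A \<le> \<delta> * card X"
    using assms(6,8) by (simp add: mult.assoc)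
  with a show "(1 - 2 * \<delta>) * card X \<le> card {x\<in>X. x \<otimes> y \<in> A}"
    unfolding \<open>y = a \<otimes> s\<close> using assms(1) by (intro card_mult_into_ge[OF assms(1,2) X assms(4) _ _ s]) auto
qed (use assms(7) in auto)

end

theorem lemma3p5:
  fixes G :: "('a, 'b) monoid_scheme"
    and A D :: "'a set"
    and \<epsilon> \<nu> :: real
  assumes "group G"
    and "A \<subseteq> carrier G" and "finite A" and "A \<noteq> {}"
    and "0 < \<epsilon>" and "\<epsilon> < 1"
    and "0 < \<nu>" and "\<nu> < 1"
    and "\<nu> \<le> real (card (left_stab G (\<epsilon>^2 / 162) A)) / real (card A)"
    and "{a \<in> A. real (card ((left_stab G (\<epsilon>^2 / 162) A <#>\<^bsub>G\<^esub> {a}) - A))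
                 < \<epsilon> / 9 * real (card (left_stab G (\<epsilon>^2 / 162) A))} \<subseteq> D"
    and "D \<subseteq> {a \<in> A. real (card ((left_stab G (\<epsilon>^2 / 162) A <#>\<^bsub>G\<^esub> {a}) - A))
                 < \<epsilon> / 9 * real (card (left_stab G (\<epsilon>^2 / 162) A))}
               <#>\<^bsub>G\<^esub> right_stab G (\<epsilon> * \<nu> / 9) A"
  shows "real (card (A - D \<union> (D - A))) < \<epsilon> * real (card A)"
proof -
  interpret group G by fact
  let ?X = "left_stab G (\<epsilon>^2 / 162) A"
  have "0 < card A"
    using assms(3,4) by (simp add: card_gt_0_iff)
  with assms(9) have "\<nu> * card A \<le> card ?X"
    by (simp add: field_simps)
  moreover have "0 < \<nu> * card A"
    using assms(7) \<open>0 < card A\<close> by simp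
  ultimately have X: "finite ?X" "?X \<noteq> {}"
    using card_gt_0_iff by fastforce+
  have missed: "card (A - D) \<le> (\<epsilon>^2 / 162) / (\<epsilon> / 9) * card A"
    using assms(2,3,5,10) X by (intro card_Diff_le_of_popular_subset) auto
  have "\<epsilon> * \<nu> / 9 = \<epsilon> / 9 * \<nu>"
    by simp
  then have added: "card (D - A) \<le> (\<epsilon>^2 / 162) / (1 - 2 * (\<epsilon> / 9)) * card A"
    using assms(2,3,5,6,11) X \<open>\<nu> * card A \<le> card ?X\<close>
    by (intro card_Diff_le_of_subset_popular_mult_stab) auto
  have "real (card (A - D \<union> (D - A))) \<le> card (A - D) + card (D - A)"
    using card_Un_le[of "A - D" "D - A"] by linarith
  also have "\<dots> \<le> ((\<epsilon>^2 / 162) / (\<epsilon> / 9) + (\<epsilon>^2 / 162) / (1 - 2 * (\<epsilon> / 9))) * card A"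
    using missed added by (simp add: distrib_right)
  also have "\<dots> < \<epsilon> * card A"
    using assms(5,6) \<open>0 < card A\<close> by (intro mult_strict_right_mono) (simp_all add: field_simps power2_eq_square)
  finally show ?thesis .
qed

end
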